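(* Let $\mathcal{E}_{\mathrm{MUB}}$ be the minimal Clifford measurement ensemble described in the context, let $V$ be any $n$-qubit Clifford unitary, $O=V^{\dagger}|\mathbf{0}\rangle\langle\mathbf{0}|V$, and for $U\in\mathcal{E}_{\mathrm{MUB}}$, $\mathbf{b}\in\{0,1\}^n$ let $\alpha_{U,\mathbf{b}}=\operatorname{tr}(O\,U^{\dagger}|\mathbf{b}\rangle\langle\mathbf{b}|U)=|\langle\mathbf{b}|UV^{\dagger}|\mathbf{0}\rangle|^2$. Then $$\sum_{U\in\mathcal{E}_{\mathrm{MUB}}}\max_{\mathbf{b}}\alpha_{U,\mathbf{b}}=2.$$ Moreover, for each $U\in\mathcal{E}_{\mathrm{MUB}}$, if the Z-Tableau of $UV^{\dagger}$ is $[C,D]$ and $r_U=\mathrm{rank}_{\mathbb{F}_2}(C)$, then exactly $2^{r_U}$ of the values $\alpha_{U,\mathbf{b}}$, $\mathbf{b}\in\{0,1\}^n$, equal $2^{-r_U}$ and the remaining $2^n-2^{r_U}$ equal $0$.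
   Context: Galois arithmetic: fix an irreducible polynomial $P_n(x)$ of degree $n$ over $\mathrm{GF}(2)$; integers $a=\sum_i a_i2^i\in\{0,\dots,2^n-1\}$ are identified with polynomials $\sum_ia_ix^i$ and row vectors $(a_0,\dots,a_{n-1})$, and $a\odot b=a(x)b(x)\bmod P_n(x)$. Let $\Gamma_{k,j}$ be the coefficient of $x^j$ in $x^k\bmod P_n$, and $M_n^{(0)}$ the $n\times n$ binary matrix with entries $\Gamma_{p+q,0}$. For $v\in\{0,\dots,2^n-1\}$ let $\alpha_{v,i,j}$ be the $j$-th entry of $(v\odot 2^i)M_n^{(0)}$ mod 2 and $g_i^{(v)}=\sqrt{-1}^{\,\alpha_{v,i,i}}X_i\prod_jZ_j^{\alpha_{v,i,j}}$ ($X_i,Z_i$ Paulis on qubit $i$). $\mathcal{E}_{\mathrm{MUB}}=\{\mathbb{I}\}\cup\{U_v\}_{v=0}^{2^n-1}$, where $U_v$ is a Clifford unitary with $U_v^{\dagger}Z_iU_v=\pm g_i^{(v)}$ for all $i$. Z-Tableau: for a Clifford unitary $W$, write $W^{\dagger}Z_iW=\pm\prod_{j=0}^{n-1}X_j^{\gamma_{ij}}Z_j^{\delta_{ij}}$ (up to phase) with $\gamma_{ij},\delta_{ij}\in\{0,1\}$; the Z-Tableau of $W$ is the pair $[C,D]$ of $n\times n$ binary matrices $C=[\gamma_{ij}]$, $D=[\delta_{ij}]$. *)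

theory Defs
  imports "HOL-Library.Z2" "HOL-Computational_Algebra.Polynomial"
    "HOL-Computational_Algebra.Factorial_Ring"
    "Jordan_Normal_Form.Schur_Decomposition" "Jordan_Normal_Form.DL_Rank"
begin

text \<open>An n-bit string (a_0,...,a_{n-1}) is encoded by the natural number
  sum_i a_i 2^i; its i-th entry is the Boolean bit a i.\<close>

definition mask_of :: "nat \<Rightarrow> (nat \<Rightarrow> bool) \<Rightarrow> nat" where
  "mask_of n f = (\<Sum>j<n. if f j then 2 ^ j else 0)"

text \<open>Computational basis state |c> is the c-th standard basis vector of C^(2^n);
  qubit j is bit j of c. The Pauli string X^a Z^b = prod_j X_j^{a_j} Z_j^{b_j}
  maps |c> to (-1)^{b.c} |c xor a>.\<close>

definition pauli :: "nat \<Rightarrow> nat \<Rightarrow> nat \<Rightarrow> complex mat" where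
  "pauli n a b = mat (2 ^ n) (2 ^ n)
     (\<lambda>(r::nat, s::nat). if r = xor s a then (-1) ^ card {j. j < n \<and> bit b j \<and> bit s j} else 0)"

definition Xq :: "nat \<Rightarrow> nat \<Rightarrow> complex mat" where
  "Xq n i = pauli n (2 ^ i) 0"

definition Zq :: "nat \<Rightarrow> nat \<Rightarrow> complex mat" where
  "Zq n i = pauli n 0 (2 ^ i)"

definition unitary_mat :: "nat \<Rightarrow> complex mat \<Rightarrow> bool" where
  "unitary_mat n U \<longleftrightarrow> U \<in> carrier_mat (2 ^ n) (2 ^ n) \<and> U * mat_adjoint U = 1\<^sub>m (2 ^ n)"

definition clifford :: "nat \<Rightarrow> complex mat \<Rightarrow> bool" where
  "clifford n U \<longleftrightarrow> unitary_mat n U \<and>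
     (\<forall>a < 2 ^ n. \<forall>b < 2 ^ n. \<exists>(ph::complex) a' b'. a' < 2 ^ n \<and> b' < 2 ^ n \<and>
        U * pauli n a b * mat_adjoint U = ph \<cdot>\<^sub>m pauli n a' b')"

definition z_tableau :: "nat \<Rightarrow> complex mat \<Rightarrow> bit mat \<Rightarrow> bit mat \<Rightarrow> bool" where
  "z_tableau n W C D \<longleftrightarrow> C \<in> carrier_mat n n \<and> D \<in> carrier_mat n n \<and>
     (\<forall>i < n. \<exists>(ph::complex).
        mat_adjoint W * Zq n i * W =
          ph \<cdot>\<^sub>m pauli n (mask_of n (\<lambda>j. C $$ (i, j) = 1)) (mask_of n (\<lambda>j. D $$ (i, j) = 1)))"

definition rank_F2 :: "bit mat \<Rightarrow> nat" where
  "rank_F2 C = vec_space.rank (dim_row C) C"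

definition poly_of_nat :: "nat \<Rightarrow> nat \<Rightarrow> bit poly" where
  "poly_of_nat n a = Poly (map (\<lambda>i. of_bool (bit a i)) [0..<n])"

definition Gamma :: "bit poly \<Rightarrow> nat \<Rightarrow> nat \<Rightarrow> bit" where
  "Gamma P k j = coeff (monom 1 k mod P) j"

definition M0 :: "bit poly \<Rightarrow> nat \<Rightarrow> nat \<Rightarrow> bit" where
  "M0 P p q = Gamma P (p + q) 0"

text \<open>alpha_{v,i,j}: j-th entry of (v (.) 2^i) M0 (mod 2); note 2^i corresponds to x^i.\<close>
definition alpha_mub :: "nat \<Rightarrow> bit poly \<Rightarrow> nat \<Rightarrow> nat \<Rightarrow> nat \<Rightarrow> bit" where
  "alpha_mub n P v i j =
     (\<Sum>p<n. coeff ((poly_of_nat n v * monom 1 i) mod P) p * M0 P p j)"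

definition g_mub :: "nat \<Rightarrow> bit poly \<Rightarrow> nat \<Rightarrow> nat \<Rightarrow> complex mat" where
  "g_mub n P v i =
     (\<i> ^ (if alpha_mub n P v i i = 1 then 1 else 0)) \<cdot>\<^sub>m
       pauli n (2 ^ i) (mask_of n (\<lambda>j. alpha_mub n P v i j = 1))"

definition mub_family :: "nat \<Rightarrow> bit poly \<Rightarrow> (nat \<Rightarrow> complex mat) \<Rightarrow> bool" where
  "mub_family n P Uf \<longleftrightarrow> (\<forall>v < 2 ^ n. clifford n (Uf v) \<and>
     (\<forall>i < n. \<exists>s::complex. (s = 1 \<or> s = -1) \<and>
        mat_adjoint (Uf v) * Zq n i * Uf v = s \<cdot>\<^sub>m g_mub n P v i))"

definition mub_ensemble :: "nat \<Rightarrow> (nat \<Rightarrow> complex mat) \<Rightarrow> complex mat list" where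
  "mub_ensemble n Uf = 1\<^sub>m (2 ^ n) # map Uf [0..<2 ^ n]"

definition outcome_prob :: "complex mat \<Rightarrow> complex mat \<Rightarrow> nat \<Rightarrow> real" where
  "outcome_prob U V b = (cmod ((U * mat_adjoint V) $$ (b, 0)))\<^sup>2"

end

theory Submission
  imports Defs
begin

text \<open>
  For \<open>W = U V^dagger\<close>, the outcome distribution of \<open>W|0>\<close> is governed by the group \<open>K\<close> of
  bit strings \<open>x\<close> such that \<open>Z^x\<close> fixes \<open>W|0>\<close> up to a phase: the Fourier transform of the
  distribution vanishes off \<open>K\<close> and is a character on \<open>K\<close>, so the distribution is uniform on
  \<open>2^n / |K|\<close> outcomes. As \<open>W^dagger Z^x W\<close> has X-part \<open>x C\<close>, \<open>K\<close> is the left kernel of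
  \<open>C\<close>, of size \<open>2^(n - rank C)\<close>.

  For the sum, \<open>x \<in> K\<close> iff the Pauli string \<open>U^dagger Z^x U\<close> lies in the set \<open>S\<close> of the
  \<open>2^n\<close> Pauli strings fixing \<open>V^dagger|0>\<close> up to a phase. Over the \<open>2^n + 1\<close> members of the
  ensemble these conjugated Z-strings run through every non-identity Pauli string exactly once
  (for the \<open>U_v\<close> by invertibility in \<open>GF(2^n)\<close>), so the \<open>|K_U|\<close> sum to
  \<open>2^n + |S| = 2^(n+1)\<close>.
\<close>

lemma bit_imp_less_of_less_pow: "(a::nat) < 2 ^ n \<Longrightarrow> bit a j \<Longrightarrow> j < n"
  by (metis bit_take_bit_iff take_bit_nat_eq_self)

lemma xor_less_pow: "(a::nat) < 2 ^ n \<Longrightarrow> b < 2 ^ n \<Longrightarrow> xor a b < 2 ^ n"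
  by (metis take_bit_nat_eq_self_iff take_bit_xor)

lemma xor_eq_0_iff: "xor (a::nat) b = 0 \<longleftrightarrow> a = b"
  by (auto simp: bit_eq_iff[of "xor a b"] bit_eq_iff[of a] bit_xor_iff)

lemma nat_eq_by_low_bits:
  "(a::nat) < 2 ^ n \<Longrightarrow> b < 2 ^ n \<Longrightarrow> (\<And>j. j < n \<Longrightarrow> bit a j = bit b j) \<Longrightarrow> a = b"
  by (intro bit_eqI) (metis bit_imp_less_of_less_pow)

lemma mask_of_Suc: "mask_of (Suc n) f = mask_of n f + (if f n then 2 ^ n else 0)"
  by (simp add: mask_of_def)

lemma mask_of_less: "mask_of n f < 2 ^ n"
  by (induction n) (auto simp: mask_of_def)

lemma bit_mask_of: "bit (mask_of n f) j \<longleftrightarrow> j < n \<and> f j"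
proof (induction n)
  case 0
  then show ?case by (simp add: mask_of_def)
next
  case (Suc n)
  have disjoint: "\<not> bit (mask_of n f) k \<or> \<not> bit ((2::nat) ^ n) k" for k
    using mask_of_less[of n f] by (auto simp: bit_exp_iff dest: bit_imp_less_of_less_pow)
  show ?case
    using Suc.IH by (auto simp: mask_of_Suc bit_disjunctive_add_iff[OF disjoint] bit_exp_iff less_Suc_eq)
qed

lemma of_bool_bit_mask_of:
  "j < n \<Longrightarrow> (of_bool (bit (mask_of n (\<lambda>j. g j = 1)) j) :: bit) = g j"
  by (cases "g j") (simp_all add: bit_mask_of)

lemma of_bool_neq_bit: "(of_bool (P \<noteq> Q) :: bit) = of_bool P + of_bool Q"
  by (cases P; cases Q) simp_all

lemma take_bit_Suc_xor: "take_bit (Suc k) (x::nat) = xor (take_bit k x) (if bit x k then 2 ^ k else 0)"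
  by (intro bit_eqI) (auto simp: bit_take_bit_iff bit_xor_iff bit_exp_iff less_Suc_eq)

section \<open>Characters of bit strings\<close>

definition parity_sign :: "nat \<Rightarrow> nat \<Rightarrow> nat \<Rightarrow> complex" where
  "parity_sign n b s = (-1) ^ card {j. j < n \<and> bit b j \<and> bit s j}"

lemma parity_sign_Suc:
  "parity_sign (Suc n) b s = parity_sign n b s * (if bit b n \<and> bit s n then -1 else 1)"
proof -
  have "{j. j < Suc n \<and> bit b j \<and> bit s j} =
      {j. j < n \<and> bit b j \<and> bit s j} \<union> (if bit b n \<and> bit s n then {n} else {})"
    by (auto simp: less_Suc_eq)
  then show ?thesis
    unfolding parity_sign_def by (auto simp: card_insert_if)
qed

lemma parity_sign_0 [simp]: "parity_sign 0 b s = 1"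
  by (simp add: parity_sign_def)

lemma parity_sign_0_left [simp]: "parity_sign n 0 s = 1"
  and parity_sign_0_right [simp]: "parity_sign n s 0 = 1"
  by (simp_all add: parity_sign_def)

lemma parity_sign_commute: "parity_sign n b s = parity_sign n s b"
  unfolding parity_sign_def by metis

lemma parity_sign_xor_right: "parity_sign n b (xor s t) = parity_sign n b s * parity_sign n b t"
  by (induction n) (simp_all add: parity_sign_Suc bit_xor_iff)

lemma parity_sign_xor_left: "parity_sign n (xor s t) b = parity_sign n s b * parity_sign n t b"
  by (metis parity_sign_commute parity_sign_xor_right)

lemma parity_sign_pow2: "j < n \<Longrightarrow> parity_sign n b (2 ^ j) = (if bit b j then -1 else 1)"
proof -
  assume "j < n"
  then have "{i. i < n \<and> bit b i \<and> bit ((2::nat) ^ j) i} = (if bit b j then {j} else {})"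
    by (auto simp: bit_exp_iff)
  then show ?thesis
    unfolding parity_sign_def by auto
qed

lemma sum_character:
  fixes f :: "'a \<Rightarrow> 'b::idom"
  assumes "finite G"
    and closed: "\<And>x y. x \<in> G \<Longrightarrow> y \<in> G \<Longrightarrow> op x y \<in> G"
    and cancel: "\<And>x y. x \<in> G \<Longrightarrow> y \<in> G \<Longrightarrow> op (op x y) y = x"
    and hom: "\<And>x y. x \<in> G \<Longrightarrow> y \<in> G \<Longrightarrow> f (op x y) = f x * f y"
  shows "(\<Sum>x\<in>G. f x) = (if \<forall>x\<in>G. f x = 1 then of_nat (card G) else 0)"
proof (cases "\<forall>x\<in>G. f x = 1")
  case False
  then obtain y where y: "y \<in> G" "f y \<noteq> 1"
    by auto
  have bij: "bij_betw (\<lambda>x. op x y) G G"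
    by (rule bij_betw_byWitness[where f' = "\<lambda>x. op x y"]) (use closed cancel y in auto)
  have "(\<Sum>x\<in>G. f x) = (\<Sum>x\<in>G. f (op x y))"
    using sum.reindex_bij_betw[OF bij, of f] by simp
  also have "\<dots> = f y * (\<Sum>x\<in>G. f x)"
    using hom y by (simp add: sum_distrib_left mult.commute)
  finally have "(1 - f y) * (\<Sum>x\<in>G. f x) = 0"
    by (simp add: algebra_simps)
  with y show ?thesis
    by auto
qed simp

lemma sum_parity_sign:
  assumes "c < 2 ^ n"
  shows "(\<Sum>x<2 ^ n. parity_sign n x c) = (if c = 0 then 2 ^ n else 0)"
proof (cases "c = 0")
  case False
  then obtain j where "bit c j"
    using bit_eq_iff[of c 0] by auto
  moreover have "j < n"
    using assms \<open>bit c j\<close> by (rule bit_imp_less_of_less_pow)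
  ultimately have "\<not> (\<forall>x\<in>{..<2 ^ n}. parity_sign n x c = 1)"
    by (auto intro!: bexI[of _ "2 ^ j"] simp: parity_sign_commute parity_sign_pow2)
  moreover have "(\<Sum>x<2 ^ n. parity_sign n x c) =
      (if \<forall>x\<in>{..<2 ^ n}. parity_sign n x c = 1 then of_nat (card {..<(2::nat) ^ n}) else 0)"
    by (rule sum_character[where op = xor]) (auto simp: xor_less_pow xor.assoc parity_sign_xor_left)
  ultimately show ?thesis
    using False by simp
qed simp

lemma smult_mat_one [simp]: "1 \<cdot>\<^sub>m (A :: 'a :: monoid_mult mat) = A"
  by (rule eq_matI) simp_all

lemma smult_smult_mat: "a \<cdot>\<^sub>m (b \<cdot>\<^sub>m (A :: 'a :: semigroup_mult mat)) = (a * b) \<cdot>\<^sub>m A"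
  by (rule eq_matI) (simp_all add: mult.assoc)

lemma mult_smult_smult_mat:
  fixes A B :: "'a :: comm_semiring_0 mat"
  assumes "A \<in> carrier_mat m k" "B \<in> carrier_mat k l"
  shows "(a \<cdot>\<^sub>m A) * (b \<cdot>\<^sub>m B) = (a * b) \<cdot>\<^sub>m (A * B)"
proof -
  have "(a \<cdot>\<^sub>m A) * (b \<cdot>\<^sub>m B) = a \<cdot>\<^sub>m (A * (b \<cdot>\<^sub>m B))"
    using assms by (intro mult_smult_assoc_mat) auto
  also have "\<dots> = (a * b) \<cdot>\<^sub>m (A * B)"
    using assms by (simp add: mult_smult_distrib smult_smult_mat)
  finally show ?thesis .
qed

lemma adjoint_dim [simp]:
  "dim_row (mat_adjoint A) = dim_col A" "dim_col (mat_adjoint A) = dim_row A"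
  by (simp_all add: mat_adjoint_def)

lemma adjoint_carrier: "A \<in> carrier_mat m k \<Longrightarrow> mat_adjoint A \<in> carrier_mat k m"
  by auto

lemma adjoint_index [simp]:
  "i < dim_col A \<Longrightarrow> j < dim_row A \<Longrightarrow> mat_adjoint A $$ (i, j) = conjugate (A $$ (j, i))"
  by (simp add: mat_adjoint_def mat_of_rows_def)

lemma adjoint_adjoint [simp]: "mat_adjoint (mat_adjoint A) = A"
  by (rule eq_matI) simp_all

lemma adjoint_one [simp]: "mat_adjoint (1\<^sub>m n :: complex mat) = 1\<^sub>m n"
  by (rule eq_matI) simp_all

lemma adjoint_mult:
  assumes "A \<in> carrier_mat m k" "B \<in> carrier_mat k l"
  shows "mat_adjoint (A * B) = mat_adjoint B * mat_adjoint A"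
proof (rule eq_matI)
  fix i j
  assume "i < dim_row (mat_adjoint B * mat_adjoint A)" "j < dim_col (mat_adjoint B * mat_adjoint A)"
  with assms show "mat_adjoint (A * B) $$ (i, j) = (mat_adjoint B * mat_adjoint A) $$ (i, j)"
    by (simp add: scalar_prod_def conjugate_dist_mul sum_conjugate mult.commute)
qed (use assms in simp_all)

lemma mult_square_carrier_mat [simp]:
  "A \<in> carrier_mat m m \<Longrightarrow> B \<in> carrier_mat m m \<Longrightarrow> A * B \<in> carrier_mat m m"
  by (rule mult_carrier_mat)

lemma assoc_mult_square_mat:
  "A \<in> carrier_mat m m \<Longrightarrow> B \<in> carrier_mat m m \<Longrightarrow> C \<in> carrier_mat m m \<Longrightarrow>
    A * B * C = A * (B * C)"
  by (rule assoc_mult_mat)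

lemma unitary_mat_carrier: "unitary_mat n U \<Longrightarrow> U \<in> carrier_mat (2 ^ n) (2 ^ n)"
  by (simp add: unitary_mat_def)

lemma unitary_mat_adjoint_carrier: "unitary_mat n U \<Longrightarrow> mat_adjoint U \<in> carrier_mat (2 ^ n) (2 ^ n)"
  by (simp add: unitary_mat_def adjoint_carrier)

lemma unitary_mat_adjoint_mult: "unitary_mat n U \<Longrightarrow> mat_adjoint U * U = 1\<^sub>m (2 ^ n)"
  unfolding unitary_mat_def using mat_mult_left_right_inverse adjoint_carrier by blast

lemma unitary_mat_adjoint: "unitary_mat n U \<Longrightarrow> unitary_mat n (mat_adjoint U)"
  using unitary_mat_adjoint_mult unitary_mat_adjoint_carrier by (auto simp: unitary_mat_def)

lemma unitary_mat_one: "unitary_mat n (1\<^sub>m (2 ^ n))"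
  by (simp add: unitary_mat_def)

lemma unitary_mat_mult:
  assumes U: "unitary_mat n U" and V: "unitary_mat n V"
  shows "unitary_mat n (U * V)"
proof -
  note carriers = unitary_mat_carrier[OF U] unitary_mat_carrier[OF V]
    unitary_mat_adjoint_carrier[OF U] unitary_mat_adjoint_carrier[OF V]
  have "U * V * mat_adjoint (U * V) = U * (V * mat_adjoint V) * mat_adjoint U"
    using carriers by (simp add: adjoint_mult[of _ "2 ^ n" "2 ^ n"] assoc_mult_square_mat)
  also have "\<dots> = 1\<^sub>m (2 ^ n)"
    using U V carriers by (simp add: unitary_mat_def)
  finally show ?thesis
    using carriers by (simp add: unitary_mat_def)
qed

lemma clifford_unitary_mat: "clifford n V \<Longrightarrow> unitary_mat n V"
  by (simp add: clifford_def)

context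
  fixes n :: nat and W :: "complex mat"
  assumes W: "unitary_mat n W"
begin

lemma conj_mult:
  assumes "A \<in> carrier_mat (2 ^ n) (2 ^ n)" "B \<in> carrier_mat (2 ^ n) (2 ^ n)"
  shows "mat_adjoint W * (A * B) * W = (mat_adjoint W * A * W) * (mat_adjoint W * B * W)"
proof -
  note carriers = unitary_mat_carrier[OF W] unitary_mat_adjoint_carrier[OF W] assms
  have "(mat_adjoint W * A * W) * (mat_adjoint W * B * W) = mat_adjoint W * (A * ((W * mat_adjoint W) * B)) * W"
    using carriers by (simp add: assoc_mult_square_mat)
  then show ?thesis
    using W assms by (simp add: unitary_mat_def)
qed

lemma conj_one: "mat_adjoint W * 1\<^sub>m (2 ^ n) * W = 1\<^sub>m (2 ^ n)"
  using W unitary_mat_adjoint_carrier unitary_mat_adjoint_mult by fastforce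

lemma conj_smult:
  assumes "A \<in> carrier_mat (2 ^ n) (2 ^ n)"
  shows "mat_adjoint W * (k \<cdot>\<^sub>m A) * W = k \<cdot>\<^sub>m (mat_adjoint W * A * W)"
  using assms unitary_mat_carrier[OF W] unitary_mat_adjoint_carrier[OF W]
  by (simp add: mult_smult_distrib[of _ "2 ^ n" "2 ^ n"] mult_smult_assoc_mat[of _ "2 ^ n" "2 ^ n"])

lemma conj_inverse:
  assumes "A \<in> carrier_mat (2 ^ n) (2 ^ n)"
  shows "W * (mat_adjoint W * A * W) * mat_adjoint W = A"
proof -
  have "W * (mat_adjoint W * A * W) * mat_adjoint W = (W * mat_adjoint W) * A * (W * mat_adjoint W)"
    using assms unitary_mat_carrier[OF W] unitary_mat_adjoint_carrier[OF W]
    by (simp add: assoc_mult_square_mat)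
  then show ?thesis
    using W assms by (simp add: unitary_mat_def)
qed

end

lemma conj_mult_adjoint:
  assumes U: "unitary_mat n U" and V: "unitary_mat n V" and "A \<in> carrier_mat (2 ^ n) (2 ^ n)"
  shows "mat_adjoint (U * mat_adjoint V) * A * (U * mat_adjoint V) = V * (mat_adjoint U * A * U) * mat_adjoint V"
  using assms unitary_mat_carrier[OF U] unitary_mat_carrier[OF V]
    unitary_mat_adjoint_carrier[OF U] unitary_mat_adjoint_carrier[OF V]
  by (simp add: adjoint_mult[of _ "2 ^ n" "2 ^ n"] assoc_mult_square_mat)

lemma pauli_carrier [simp]: "pauli n a b \<in> carrier_mat (2 ^ n) (2 ^ n)"
  and pauli_dim [simp]: "dim_row (pauli n a b) = 2 ^ n" "dim_col (pauli n a b) = 2 ^ n"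
  by (simp_all add: pauli_def)

lemma pauli_index:
  "r < 2 ^ n \<Longrightarrow> s < 2 ^ n \<Longrightarrow>
    pauli n a b $$ (r, s) = (if r = xor s a then parity_sign n b s else 0)"
  by (simp add: pauli_def parity_sign_def)

lemma pauli_index_0_0: "pauli n a b $$ (0, 0) = (if a = 0 then 1 else 0)"
  by (simp add: pauli_index)

lemma pauli_0_0: "pauli n 0 0 = 1\<^sub>m (2 ^ n)"
  by (rule eq_matI) (auto simp: pauli_index)

lemma pauli_mult:
  assumes "a < 2 ^ n" "a' < 2 ^ n"
  shows "pauli n a b * pauli n a' b' = parity_sign n b a' \<cdot>\<^sub>m pauli n (xor a a') (xor b b')"
proof (rule eq_matI)
  fix r s
  assume "r < dim_row (parity_sign n b a' \<cdot>\<^sub>m pauli n (xor a a') (xor b b'))"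
    and "s < dim_col (parity_sign n b a' \<cdot>\<^sub>m pauli n (xor a a') (xor b b'))"
  then have r: "r < 2 ^ n" and s: "s < 2 ^ n"
    by auto
  have t: "xor s a' < 2 ^ n"
    using s assms by (simp add: xor_less_pow)
  have "(pauli n a b * pauli n a' b') $$ (r, s) =
      (\<Sum>t<2 ^ n. pauli n a b $$ (r, t) * pauli n a' b' $$ (t, s))"
    using r s by (simp add: scalar_prod_def atLeast0LessThan)
  also have "\<dots> = (\<Sum>t<2 ^ n. if t = xor s a' then pauli n a b $$ (r, t) * parity_sign n b' s else 0)"
    by (rule sum.cong) (auto simp: pauli_index s)
  also have "\<dots> = pauli n a b $$ (r, xor s a') * parity_sign n b' s"
    using t by simp
  also have "\<dots> = (parity_sign n b a' \<cdot>\<^sub>m pauli n (xor a a') (xor b b')) $$ (r, s)"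
    using r s t
    by (simp add: pauli_index parity_sign_xor_right parity_sign_xor_left ac_simps)
  finally show "(pauli n a b * pauli n a' b') $$ (r, s) =
      (parity_sign n b a' \<cdot>\<^sub>m pauli n (xor a a') (xor b b')) $$ (r, s)" .
qed auto

lemma pauli_Z_mult: "pauli n 0 x * pauli n 0 y = pauli n 0 (xor x y)"
  using pauli_mult[of 0 n 0 x y] by simp

lemma pauli_labels_unique:
  assumes "ph \<noteq> 0" and a: "a < 2 ^ n" "a' < 2 ^ n" and b: "b < 2 ^ n" "b' < 2 ^ n"
    and eq: "ph \<cdot>\<^sub>m pauli n a b = ph' \<cdot>\<^sub>m pauli n a' b'"
  shows "a = a'" "b = b'"
proof -
  have "ph = (if a = a' then ph' else 0)"
    using arg_cong[OF eq, of "\<lambda>M. M $$ (a, 0)"] a by (simp add: pauli_index)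
  with \<open>ph \<noteq> 0\<close> have a_eq: "a = a'" and ph: "ph = ph'"
    by (auto split: if_splits)
  show "a = a'"
    by (fact a_eq)
  show "b = b'"
  proof (rule nat_eq_by_low_bits[OF b])
    fix j
    assume "j < n"
    then have j: "(2::nat) ^ j < 2 ^ n" and aj: "xor (2 ^ j) a < 2 ^ n"
      using a by (simp_all add: xor_less_pow)
    have "ph * parity_sign n b (2 ^ j) = ph * parity_sign n b' (2 ^ j)"
      using arg_cong[OF eq, of "\<lambda>M. M $$ (xor (2 ^ j) a, 2 ^ j)"] j aj a_eq ph
      by (simp add: pauli_index)
    then show "bit b j = bit b' j"
      using \<open>ph \<noteq> 0\<close> \<open>j < n\<close> by (auto simp: parity_sign_pow2 split: if_splits)
  qed
qed

lemma conj_pauli_phase_nonzero: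
  assumes W: "unitary_mat n W" and "a < 2 ^ n" and M: "M \<in> carrier_mat (2 ^ n) (2 ^ n)"
    and conj: "mat_adjoint W * pauli n a b * W = ph \<cdot>\<^sub>m M"
  shows "ph \<noteq> 0"
proof
  assume "ph = 0"
  then have "mat_adjoint W * pauli n a b * W = 0\<^sub>m (2 ^ n) (2 ^ n)"
    using conj M by auto
  then have "pauli n a b = W * 0\<^sub>m (2 ^ n) (2 ^ n) * mat_adjoint W"
    using conj_inverse[OF W, of "pauli n a b"] by simp
  also have "\<dots> = 0\<^sub>m (2 ^ n) (2 ^ n)"
    using unitary_mat_carrier[OF W] unitary_mat_adjoint_carrier[OF W] by simp
  finally have "pauli n a b $$ (a, 0) = 0"
    using \<open>a < 2 ^ n\<close> by simp
  with \<open>a < 2 ^ n\<close> show False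
    by (simp add: pauli_index)
qed

lemma clifford_conj_pauli:
  assumes V: "clifford n V" and "a < 2 ^ n" "b < 2 ^ n"
  obtains ph a' b' where "ph \<noteq> 0" "a' < 2 ^ n" "b' < 2 ^ n"
    "V * pauli n a b * mat_adjoint V = ph \<cdot>\<^sub>m pauli n a' b'"
proof -
  obtain ph a' b' where labels: "a' < 2 ^ n" "b' < 2 ^ n"
    and conj: "V * pauli n a b * mat_adjoint V = ph \<cdot>\<^sub>m pauli n a' b'"
    using V assms unfolding clifford_def by blast
  have "ph \<noteq> 0"
    using conj_pauli_phase_nonzero[OF unitary_mat_adjoint[OF clifford_unitary_mat[OF V]]
        \<open>a < 2 ^ n\<close> pauli_carrier, of b ph a' b'] conj
    by simp
  with labels conj that show ?thesis
    by blast
qed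

section \<open>Outcome distribution of a state with a Pauli Z-tableau\<close>

fun xor_comb :: "(nat \<Rightarrow> nat) \<Rightarrow> nat \<Rightarrow> nat \<Rightarrow> nat" where
  "xor_comb c x 0 = 0"
| "xor_comb c x (Suc k) = xor (xor_comb c x k) (if bit x k then c k else 0)"

lemma xor_comb_less: "(\<And>i. i < k \<Longrightarrow> c i < 2 ^ n) \<Longrightarrow> xor_comb c x k < 2 ^ n"
  by (induction k) (auto simp: xor_less_pow)

lemma xor_comb_0 [simp]: "xor_comb c 0 k = 0"
  by (induction k) auto

lemma xor_comb_zero_fun [simp]: "xor_comb (\<lambda>_. 0) x k = 0"
  by (induction k) auto

lemma xor_comb_pow2: "xor_comb (\<lambda>i. 2 ^ i) x k = take_bit k x"
  by (induction k) (simp_all add: take_bit_Suc_xor)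

lemma of_bool_bit_xor_comb:
  "(of_bool (bit (xor_comb c x k) j) :: bit) = (\<Sum>i<k. of_bool (bit x i) * of_bool (bit (c i) j))"
  by (induction k) (auto simp: bit_xor_iff of_bool_neq_bit)

lemma cnj_mult_self_eq_cmod_square: "cnj z * z = complex_of_real ((cmod z)\<^sup>2)"
  by (simp only: complex_norm_square mult.commute)

locale pauli_tableau =
  fixes n :: nat and W :: "complex mat" and c d :: "nat \<Rightarrow> nat"
  assumes unitary: "unitary_mat n W"
    and conj_Zq: "\<And>i. i < n \<Longrightarrow> \<exists>ph. mat_adjoint W * Zq n i * W = ph \<cdot>\<^sub>m pauli n (c i) (d i)"
    and X_label_less: "\<And>i. i < n \<Longrightarrow> c i < 2 ^ n"
    and Z_label_less: "\<And>i. i < n \<Longrightarrow> d i < 2 ^ n"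
begin

lemma conj_Z_take_bit:
  "k \<le> n \<Longrightarrow> \<exists>\<theta>. mat_adjoint W * pauli n 0 (take_bit k x) * W =
      \<theta> \<cdot>\<^sub>m pauli n (xor_comb c x k) (xor_comb d x k)"
proof (induction k)
  case 0
  show ?case
    using conj_one[OF unitary] by (intro exI[of _ 1]) (simp add: pauli_0_0)
next
  case (Suc k)
  then obtain \<theta> where IH: "mat_adjoint W * pauli n 0 (take_bit k x) * W =
      \<theta> \<cdot>\<^sub>m pauli n (xor_comb c x k) (xor_comb d x k)"
    by auto
  show ?case
  proof (cases "bit x k")
    case True
    obtain ph where ph: "mat_adjoint W * Zq n k * W = ph \<cdot>\<^sub>m pauli n (c k) (d k)"
      using conj_Zq Suc.prems by fastforce
    have "pauli n 0 (take_bit (Suc k) x) = pauli n 0 (take_bit k x) * Zq n k"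
      using True by (simp add: take_bit_Suc_xor Zq_def pauli_Z_mult)
    then have "mat_adjoint W * pauli n 0 (take_bit (Suc k) x) * W =
        (\<theta> \<cdot>\<^sub>m pauli n (xor_comb c x k) (xor_comb d x k)) * (ph \<cdot>\<^sub>m pauli n (c k) (d k))"
      using conj_mult[OF unitary, of "pauli n 0 (take_bit k x)" "Zq n k"] IH ph
      by (simp add: Zq_def)
    also have "\<dots> = (\<theta> * ph * parity_sign n (xor_comb d x k) (c k)) \<cdot>\<^sub>m
        pauli n (xor_comb c x (Suc k)) (xor_comb d x (Suc k))"
      using Suc.prems True X_label_less xor_comb_less[of k c n]
      by (simp add: mult_smult_smult_mat[OF pauli_carrier pauli_carrier] pauli_mult smult_smult_mat)
    finally show ?thesis
      by blast
  next
    case False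
    with IH show ?thesis
      by (intro exI[of _ \<theta>]) (simp add: take_bit_Suc_xor)
  qed
qed

lemma conj_Z_string:
  assumes "x < 2 ^ n"
  obtains \<theta> where "\<theta> \<noteq> 0"
    "mat_adjoint W * pauli n 0 x * W = \<theta> \<cdot>\<^sub>m pauli n (xor_comb c x n) (xor_comb d x n)"
proof -
  obtain \<theta> where conj: "mat_adjoint W * pauli n 0 x * W = \<theta> \<cdot>\<^sub>m pauli n (xor_comb c x n) (xor_comb d x n)"
    using conj_Z_take_bit[of n x] assms by (auto simp: take_bit_nat_eq_self)
  moreover have "\<theta> \<noteq> 0"
    using conj_pauli_phase_nonzero[OF unitary _ _ conj] by simp
  ultimately show ?thesis
    using that by blast
qed

definition prob :: "nat \<Rightarrow> real" where
  "prob b = (cmod (W $$ (b, 0)))\<^sup>2"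

definition z_expectation :: "nat \<Rightarrow> complex" where
  "z_expectation x = (mat_adjoint W * pauli n 0 x * W) $$ (0, 0)"

definition z_stabilizers :: "nat set" where
  "z_stabilizers = {x. x < 2 ^ n \<and> z_expectation x \<noteq> 0}"

definition support :: "nat set" where
  "support = {b. b < 2 ^ n \<and> (\<forall>x\<in>z_stabilizers. parity_sign n b x * z_expectation x = 1)}"

lemma W_carrier: "W \<in> carrier_mat (2 ^ n) (2 ^ n)"
  using unitary by (rule unitary_mat_carrier)

lemma z_expectation_eq_sum: "z_expectation x = (\<Sum>s<2 ^ n. complex_of_real (prob s) * parity_sign n x s)"
proof -
  have row: "(mat_adjoint W * pauli n 0 x) $$ (0, t) = cnj (W $$ (t, 0)) * parity_sign n x t"
    if "t < 2 ^ n" for t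
  proof -
    have "(mat_adjoint W * pauli n 0 x) $$ (0, t) =
        (\<Sum>s<2 ^ n. mat_adjoint W $$ (0, s) * pauli n 0 x $$ (s, t))"
      using W_carrier that by (simp add: scalar_prod_def atLeast0LessThan)
    also have "\<dots> = (\<Sum>s<2 ^ n. if s = t then mat_adjoint W $$ (0, s) * parity_sign n x t else 0)"
      using that by (intro sum.cong) (auto simp: pauli_index)
    finally show ?thesis
      using that W_carrier by simp
  qed
  have "z_expectation x = (\<Sum>t<2 ^ n. (mat_adjoint W * pauli n 0 x) $$ (0, t) * W $$ (t, 0))"
    unfolding z_expectation_def using W_carrier by (simp add: scalar_prod_def atLeast0LessThan)
  also have "\<dots> = (\<Sum>t<2 ^ n. complex_of_real (prob t) * parity_sign n x t)"
    by (intro sum.cong) (auto simp: row prob_def cnj_mult_self_eq_cmod_square)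
  finally show ?thesis .
qed

lemma sum_prob: "(\<Sum>s<2 ^ n. prob s) = 1"
proof -
  have "(1::complex) = (mat_adjoint W * W) $$ (0, 0)"
    using unitary_mat_adjoint_mult[OF unitary] by simp
  also have "\<dots> = (\<Sum>t<2 ^ n. complex_of_real (prob t))"
    using W_carrier by (simp add: scalar_prod_def atLeast0LessThan prob_def cnj_mult_self_eq_cmod_square)
  finally show ?thesis
    by (metis of_real_eq_1_iff of_real_sum)
qed

lemma prob_fourier:
  assumes "b < 2 ^ n"
  shows "2 ^ n * complex_of_real (prob b) = (\<Sum>x<2 ^ n. parity_sign n b x * z_expectation x)"
proof -
  have "(\<Sum>x<2 ^ n. parity_sign n b x * z_expectation x) =
      (\<Sum>x<2 ^ n. \<Sum>s<2 ^ n. complex_of_real (prob s) * parity_sign n x (xor b s))"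
    by (simp add: z_expectation_eq_sum sum_distrib_left parity_sign_xor_right parity_sign_commute ac_simps)
  also have "\<dots> = (\<Sum>s<2 ^ n. complex_of_real (prob s) * (\<Sum>x<2 ^ n. parity_sign n x (xor b s)))"
    by (subst sum.swap) (simp add: sum_distrib_left)
  also have "\<dots> = (\<Sum>s<2 ^ n. if s = b then 2 ^ n * complex_of_real (prob s) else 0)"
    using assms by (intro sum.cong) (auto simp: sum_parity_sign xor_less_pow xor_eq_0_iff)
  finally show ?thesis
    using assms by simp
qed

lemma z_stabilizers_eq: "z_stabilizers = {x. x < 2 ^ n \<and> xor_comb c x n = 0}"
proof -
  have "z_expectation x \<noteq> 0 \<longleftrightarrow> xor_comb c x n = 0" if x: "x < 2 ^ n" for x
  proof -
    obtain \<theta> where "\<theta> \<noteq> 0" "mat_adjoint W * pauli n 0 x * W = \<theta> \<cdot>\<^sub>m pauli n (xor_comb c x n) (xor_comb d x n)"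
      by (rule conj_Z_string[OF x])
    then show ?thesis
      by (simp add: z_expectation_def pauli_index_0_0)
  qed
  then show ?thesis
    by (auto simp: z_stabilizers_def)
qed

lemma conj_z_stabilizer:
  assumes "x \<in> z_stabilizers"
  shows "mat_adjoint W * pauli n 0 x * W = z_expectation x \<cdot>\<^sub>m pauli n 0 (xor_comb d x n)"
proof -
  have x: "x < 2 ^ n" and "xor_comb c x n = 0"
    using assms by (auto simp: z_stabilizers_eq)
  moreover obtain \<theta> where "mat_adjoint W * pauli n 0 x * W = \<theta> \<cdot>\<^sub>m pauli n (xor_comb c x n) (xor_comb d x n)"
    by (rule conj_Z_string[OF x])
  ultimately show ?thesis
    by (simp add: z_expectation_def pauli_index_0_0)
qed

lemma z_expectation_xor:
  assumes "x \<in> z_stabilizers" "y \<in> z_stabilizers"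
  shows "z_expectation (xor x y) = z_expectation x * z_expectation y"
proof -
  have "mat_adjoint W * pauli n 0 (xor x y) * W =
      (mat_adjoint W * pauli n 0 x * W) * (mat_adjoint W * pauli n 0 y * W)"
    using conj_mult[OF unitary] by (simp flip: pauli_Z_mult)
  also have "\<dots> = (z_expectation x * z_expectation y) \<cdot>\<^sub>m pauli n 0 (xor (xor_comb d x n) (xor_comb d y n))"
    using assms by (simp add: conj_z_stabilizer mult_smult_smult_mat[OF pauli_carrier pauli_carrier] pauli_Z_mult)
  finally show ?thesis
    by (simp add: z_expectation_def pauli_index_0_0)
qed

lemma xor_mem_z_stabilizers: "x \<in> z_stabilizers \<Longrightarrow> y \<in> z_stabilizers \<Longrightarrow> xor x y \<in> z_stabilizers"
  using z_expectation_xor by (auto simp: z_stabilizers_def xor_less_pow)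

lemma z_expectation_0: "z_expectation 0 = 1"
  using conj_one[OF unitary] by (simp add: z_expectation_def pauli_0_0)

lemma card_z_stabilizers_pos: "card z_stabilizers > 0"
proof -
  have "finite z_stabilizers" "0 \<in> z_stabilizers"
    using z_expectation_0 by (simp_all add: z_stabilizers_def)
  then show ?thesis
    by (auto simp: card_gt_0_iff)
qed

lemma prob_eq:
  assumes "b < 2 ^ n"
  shows "prob b = (if b \<in> support then card z_stabilizers / 2 ^ n else 0)"
proof -
  let ?f = "\<lambda>x. parity_sign n b x * z_expectation x"
  have "complex_of_real (2 ^ n * prob b) = (\<Sum>x<2 ^ n. ?f x)"
    using prob_fourier[OF assms] by simp
  also have "\<dots> = (\<Sum>x\<in>z_stabilizers. ?f x)"
    by (rule sum.mono_neutral_right) (auto simp: z_stabilizers_def)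
  also have "\<dots> = (if \<forall>x\<in>z_stabilizers. ?f x = 1 then of_nat (card z_stabilizers) else 0)"
    by (rule sum_character[where op = xor])
      (simp_all add: z_stabilizers_def xor_mem_z_stabilizers[unfolded z_stabilizers_def]
        z_expectation_xor[unfolded z_stabilizers_def] parity_sign_xor_right xor.assoc xor_less_pow mult_ac)
  also have "\<dots> = complex_of_real (if b \<in> support then card z_stabilizers else 0)"
    using assms by (simp add: support_def)
  finally have "2 ^ n * prob b = (if b \<in> support then card z_stabilizers else 0)"
    by (simp only: of_real_eq_iff)
  then show ?thesis
    by (auto simp: field_simps)
qed

lemma support_subset: "support \<subseteq> {..<2 ^ n}"
  by (auto simp: support_def)

lemma card_support_mult_card_z_stabilizers: "card support * card z_stabilizers = 2 ^ n"
proof -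
  have "1 = (\<Sum>s<2 ^ n. prob s)"
    using sum_prob by simp
  also have "\<dots> = (\<Sum>s<2 ^ n. if s \<in> support then card z_stabilizers / 2 ^ n else 0)"
    by (intro sum.cong) (auto simp: prob_eq)
  also have "\<dots> = card support * (card z_stabilizers / 2 ^ n)"
    using support_subset by (simp add: sum.If_cases Int_absorb1)
  finally have "real (card support * card z_stabilizers) = 2 ^ n"
    by (simp add: field_simps)
  then show ?thesis
    by (metis of_nat_eq_iff of_nat_numeral of_nat_power)
qed

lemma Max_prob: "Max (prob ` {..<2 ^ n}) = card z_stabilizers / 2 ^ n"
proof (rule Max_eqI)
  obtain b where "b \<in> support"
    using card_support_mult_card_z_stabilizers by fastforce
  then show "card z_stabilizers / 2 ^ n \<in> prob ` {..<2 ^ n}"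
    using support_subset by (auto simp: prob_eq intro!: image_eqI[of _ _ b])
qed (auto simp: prob_eq)

lemma card_prob_eq_Max: "card {b. b < 2 ^ n \<and> prob b = card z_stabilizers / 2 ^ n} = card support"
proof -
  have "{b. b < 2 ^ n \<and> prob b = card z_stabilizers / 2 ^ n} = support"
    using card_z_stabilizers_pos support_subset by (auto simp: prob_eq split: if_splits)
  then show ?thesis
    by simp
qed

lemma card_prob_eq_0: "card {b. b < 2 ^ n \<and> prob b = 0} = 2 ^ n - card support"
proof -
  have "{b. b < 2 ^ n \<and> prob b = 0} = {..<2 ^ n} - support"
    using card_z_stabilizers_pos support_subset by (auto simp: prob_eq split: if_splits)
  then show ?thesis
    using support_subset by (simp add: card_Diff_subset finite_subset)
qed

end

section \<open>Orthogonal complements over GF(2)\<close>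

definition bit_vec :: "nat \<Rightarrow> nat \<Rightarrow> bit vec" where
  "bit_vec n x = vec n (\<lambda>i. of_bool (bit x i))"

definition nat_of_bit_vec :: "nat \<Rightarrow> bit vec \<Rightarrow> nat" where
  "nat_of_bit_vec n y = mask_of n (\<lambda>i. y $ i = 1)"

lemma bit_vec_carrier [simp]: "bit_vec n x \<in> carrier_vec n"
  and bit_vec_dim [simp]: "dim_vec (bit_vec n x) = n"
  and bit_vec_index [simp]: "i < n \<Longrightarrow> bit_vec n x $ i = of_bool (bit x i)"
  by (simp_all add: bit_vec_def)

lemma bit_vec_nat_of_bit_vec: "y \<in> carrier_vec n \<Longrightarrow> bit_vec n (nat_of_bit_vec n y) = y"
  by (intro eq_vecI) (auto simp: nat_of_bit_vec_def bit_mask_of)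

lemma bij_betw_bit_vec: "bij_betw (bit_vec n) {..<2 ^ n} (carrier_vec n)"
  by (rule bij_betw_byWitness[where f' = "nat_of_bit_vec n"])
    (auto simp: bit_vec_nat_of_bit_vec[unfolded nat_of_bit_vec_def] nat_of_bit_vec_def mask_of_less bit_mask_of
      intro!: nat_eq_by_low_bits)

lemma card_Collect_bit_vec:
  "card {x. x < 2 ^ n \<and> P (bit_vec n x)} = card {y \<in> carrier_vec n. P y}"
  using bij_betw_same_card[OF bij_betw_Collect[OF bij_betw_bit_vec, where Q = P and P = "\<lambda>x. P (bit_vec n x)"]]
  by (simp add: lessThan_def)

lemma finite_carrier_vec_bit: "finite (carrier_vec n :: bit vec set)"
  using bij_betw_finite bij_betw_bit_vec by blast

definition sign_of_bit :: "bit \<Rightarrow> complex" where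
  "sign_of_bit b = (if b = 0 then 1 else -1)"

lemma sign_of_bit_add: "sign_of_bit (a + b) = sign_of_bit a * sign_of_bit b"
  by (cases a; cases b) (simp_all add: sign_of_bit_def)

lemma bit_vec_add_cancel: "x \<in> carrier_vec n \<Longrightarrow> y \<in> carrier_vec n \<Longrightarrow> x + y + y = (x :: bit vec)"
  by (intro eq_vecI) auto

lemma sum_sign_of_bit_scalar_prod:
  assumes v: "v \<in> carrier_vec n"
  shows "(\<Sum>y\<in>carrier_vec n. sign_of_bit (v \<bullet> y)) = (if v = 0\<^sub>v n then 2 ^ n else 0)"
proof -
  have "(\<Sum>y\<in>carrier_vec n. sign_of_bit (v \<bullet> y)) =
      (if \<forall>y\<in>carrier_vec n. sign_of_bit (v \<bullet> y) = 1 then of_nat (card (carrier_vec n :: bit vec set)) else 0)"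
  proof (rule sum_character[where op = "(+)"])
    fix x y :: "bit vec"
    assume x: "x \<in> carrier_vec n" and y: "y \<in> carrier_vec n"
    show "x + y \<in> carrier_vec n"
      using x y by simp
    show "x + y + y = x"
      using x y by (rule bit_vec_add_cancel)
    show "sign_of_bit (v \<bullet> (x + y)) = sign_of_bit (v \<bullet> x) * sign_of_bit (v \<bullet> y)"
      by (simp only: scalar_prod_add_distrib[OF v x y] sign_of_bit_add)
  qed (fact finite_carrier_vec_bit)
  moreover have "(\<forall>y\<in>carrier_vec n. sign_of_bit (v \<bullet> y) = 1) \<longleftrightarrow> v = 0\<^sub>v n"
  proof
    assume all: "\<forall>y\<in>carrier_vec n. sign_of_bit (v \<bullet> y) = 1"
    have "v $ i = 0" if "i < n" for i
      using all[rule_format, of "unit_vec n i"] v that by (auto simp: sign_of_bit_def split: if_splits)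
    then show "v = 0\<^sub>v n"
      using v by (intro eq_vecI) auto
  qed (auto simp: sign_of_bit_def)
  moreover have "card (carrier_vec n :: bit vec set) = 2 ^ n"
    using bij_betw_same_card[OF bij_betw_bit_vec] by simp
  ultimately show ?thesis
    by simp
qed

lemma card_mult_card_orthogonal:
  fixes V :: "bit vec set"
  assumes V: "V \<subseteq> carrier_vec n" and "0\<^sub>v n \<in> V"
    and add_closed: "\<And>x y. x \<in> V \<Longrightarrow> y \<in> V \<Longrightarrow> x + y \<in> V"
  shows "card V * card {y \<in> carrier_vec n. \<forall>v\<in>V. v \<bullet> y = 0} = 2 ^ n"
proof -
  let ?C = "carrier_vec n :: bit vec set" and ?O = "{y \<in> carrier_vec n. \<forall>v\<in>V. v \<bullet> y = 0}"
  have "finite V"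
    using V finite_carrier_vec_bit finite_subset by blast
  have inner: "(\<Sum>v\<in>V. sign_of_bit (v \<bullet> y)) = (if y \<in> ?O then of_nat (card V) else 0)"
    if "y \<in> ?C" for y
  proof -
    have "(\<Sum>v\<in>V. sign_of_bit (v \<bullet> y)) =
        (if \<forall>v\<in>V. sign_of_bit (v \<bullet> y) = 1 then of_nat (card V) else 0)"
    proof (rule sum_character[where op = "(+)"])
      fix v w
      assume "v \<in> V" "w \<in> V"
      then have v: "v \<in> carrier_vec n" and w: "w \<in> carrier_vec n"
        using V by auto
      show "v + w + w = v"
        using v w by (rule bit_vec_add_cancel)
      show "sign_of_bit ((v + w) \<bullet> y) = sign_of_bit (v \<bullet> y) * sign_of_bit (w \<bullet> y)"
        by (simp only: add_scalar_prod_distrib[OF v w that] sign_of_bit_add)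
    qed (use \<open>finite V\<close> add_closed in auto)
    with that show ?thesis
      by (simp add: sign_of_bit_def)
  qed
  have "of_nat (card V * card ?O) = (\<Sum>y\<in>{y \<in> ?C. y \<in> ?O}. of_nat (card V) :: complex)"
    by (simp add: conj_commute)
  also have "\<dots> = (\<Sum>y\<in>?C. if y \<in> ?O then of_nat (card V) else 0)"
    by (rule sum.inter_filter[OF finite_carrier_vec_bit])
  also have "\<dots> = (\<Sum>y\<in>?C. \<Sum>v\<in>V. sign_of_bit (v \<bullet> y))"
    by (rule sum.cong[OF refl]) (simp add: inner)
  also have "\<dots> = (\<Sum>v\<in>V. \<Sum>y\<in>?C. sign_of_bit (v \<bullet> y))"
    by (rule sum.swap)
  also have "\<dots> = (\<Sum>v\<in>V. if v = 0\<^sub>v n then 2 ^ n else 0)"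
    using V by (intro sum.cong refl sum_sign_of_bit_scalar_prod) auto
  also have "\<dots> = of_nat (2 ^ n)"
    using \<open>finite V\<close> \<open>0\<^sub>v n \<in> V\<close> by simp
  finally show ?thesis
    by (simp only: of_nat_eq_iff)
qed

context vec_space
begin

lemma card_span_lin_indpt:
  assumes fin: "finite S" and S: "S \<subseteq> carrier_vec n" and indpt: "lin_indpt S"
  shows "card (span S) = card (UNIV :: 'a set) ^ card S"
proof -
  have lincomb_cong: "lincomb a S = lincomb b S" if "\<And>u. u \<in> S \<Longrightarrow> a u = b u" for a b
  proof (rule eq_vecI)
    fix i
    assume "i < dim_vec (lincomb b S)"
    then have "i < n"
      using lincomb_dim[OF fin S] by simp
    then show "lincomb a S $ i = lincomb b S $ i"
      unfolding lincomb_index[OF \<open>i < n\<close> S] using that by (intro sum.cong) auto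
  qed (simp add: lincomb_dim[OF fin S])
  have "span S = (\<lambda>a. lincomb a S) ` (S \<rightarrow>\<^sub>E UNIV)"
  proof
    show "span S \<subseteq> (\<lambda>a. lincomb a S) ` (S \<rightarrow>\<^sub>E UNIV)"
    proof
      fix v
      assume "v \<in> span S"
      then obtain a where "v = lincomb a S"
        using finite_in_span[OF fin S] by auto
      also have "\<dots> = lincomb (restrict a S) S"
        by (rule lincomb_cong) simp
      finally show "v \<in> (\<lambda>a. lincomb a S) ` (S \<rightarrow>\<^sub>E UNIV)"
        by (intro image_eqI[of _ _ "restrict a S"]) auto
    qed
    show "(\<lambda>a. lincomb a S) ` (S \<rightarrow>\<^sub>E UNIV) \<subseteq> span S"
      using finite_span[OF fin S] by auto
  qed
  moreover have "inj_on (\<lambda>a. lincomb a S) (S \<rightarrow>\<^sub>E UNIV)"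
  proof (rule inj_onI)
    fix a b
    assume a: "a \<in> S \<rightarrow>\<^sub>E UNIV" and b: "b \<in> S \<rightarrow>\<^sub>E UNIV" and eq: "lincomb a S = lincomb b S"
    have "lincomb (\<lambda>u. a u - b u) S = 0\<^sub>v n"
    proof (rule eq_vecI)
      fix i
      assume "i < dim_vec (0\<^sub>v n)"
      then have "i < n"
        by simp
      have "lincomb (\<lambda>u. a u - b u) S $ i = lincomb a S $ i - lincomb b S $ i"
        unfolding lincomb_index[OF \<open>i < n\<close> S] by (simp add: sum_subtractf algebra_simps)
      then show "lincomb (\<lambda>u. a u - b u) S $ i = 0\<^sub>v n $ i"
        using eq \<open>i < n\<close> by simp
    qed (simp add: lincomb_dim[OF fin S])
    then have "(\<lambda>u. a u - b u) \<in> S \<rightarrow> {0}"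
      using not_lindepD[OF indpt fin subset_refl] by simp
    then have "\<forall>u\<in>S. a u = b u"
      by auto
    with a b show "a = b"
      by (intro PiE_ext) auto
  qed
  ultimately have "card (span S) = card (S \<rightarrow>\<^sub>E (UNIV :: 'a set))"
    by (simp add: card_image)
  also have "\<dots> = card (UNIV :: 'a set) ^ card S"
    by (simp add: card_PiE[OF fin])
  finally show ?thesis .
qed

lemma span_maximal_lin_indpt:
  assumes S: "S \<subseteq> carrier_vec n" and max: "maximal U (\<lambda>T. T \<subseteq> S \<and> lin_indpt T)"
  shows "span U = span S"
proof (rule ccontr)
  assume ne: "span U \<noteq> span S"
  have U: "U \<subseteq> S" "lin_indpt U"
    using max by (auto simp: maximal_def)
  then have "span U \<subseteq> span S"
    by (metis span_is_monotone)
  then have "\<not> S \<subseteq> span U"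
    by (meson U(1) ne S span_is_submodule span_is_subset subset_antisym subset_trans)
  then obtain s where s: "s \<in> S" "s \<notin> span U"
    by blast
  then have "lin_indpt (U \<union> {s})"
    by (meson U S lin_dep_iff_in_span rev_subsetD span_mem subset_trans)
  moreover have "s \<notin> U"
    using U(1) s S span_mem by auto
  ultimately have "\<not> maximal U (\<lambda>T. T \<subseteq> S \<and> lin_indpt T)"
    unfolding maximal_def using U(1) s(1) by auto
  with max show False
    by contradiction
qed

lemma card_span_cols:
  assumes A: "A \<in> carrier_mat n nc"
  shows "card (span (set (cols A))) = card (UNIV :: 'a set) ^ rank A"
proof -
  have cols: "set (cols A) \<subseteq> carrier_vec n"
    using A cols_dim by blast
  have "lin_indpt {}"
    by (simp add: lin_dep_def)
  then obtain U where "finite U" and max: "maximal U (\<lambda>T. T \<subseteq> set (cols A) \<and> lin_indpt T)"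
    using maximal_exists_superset[of "set (cols A)" "\<lambda>T. T \<subseteq> set (cols A) \<and> lin_indpt T" "{}"]
    by auto
  then have "U \<subseteq> set (cols A)" "lin_indpt U"
    by (auto simp: maximal_def)
  then have "card (span U) = card (UNIV :: 'a set) ^ card U"
    using card_span_lin_indpt[OF \<open>finite U\<close>] cols by blast
  then show ?thesis
    using rank_card_indpt[OF A max] span_maximal_lin_indpt[OF cols max] by simp
qed

lemma orthogonal_span_iff:
  assumes fin: "finite S" and S: "S \<subseteq> carrier_vec n" and y: "y \<in> carrier_vec n"
  shows "(\<forall>v\<in>span S. v \<bullet> y = 0) \<longleftrightarrow> (\<forall>s\<in>S. s \<bullet> y = 0)"
proof
  assume orth: "\<forall>s\<in>S. s \<bullet> y = 0"
  show "\<forall>v\<in>span S. v \<bullet> y = 0"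
  proof
    fix v
    assume "v \<in> span S"
    then obtain a where "v = lincomb a S"
      using finite_in_span[OF fin S] by auto
    then have "v \<bullet> y = (\<Sum>u\<in>S. (a u \<cdot>\<^sub>v u) \<bullet> y)"
      unfolding lincomb_def using finsum_scalar_prod_sum[of "\<lambda>u. a u \<cdot>\<^sub>v u" S y] S y by auto
    also have "\<dots> = 0"
      using orth S y by (intro sum.neutral) auto
    finally show "v \<bullet> y = 0" .
  qed
qed (use S in_own_span in blast)

end

lemma card_UNIV_bit: "card (UNIV :: bit set) = 2"
proof -
  have "(UNIV :: bit set) = {0, 1}"
    by (auto intro: bit.exhaust)
  then show ?thesis
    unfolding \<open>UNIV = {0, 1}\<close> by simp
qed

lemma col_scalar_prod_bit_vec:
  fixes C :: "bit mat"
  assumes C: "C \<in> carrier_mat m n" and "j < n"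
  shows "col C j \<bullet> bit_vec m x = of_bool (bit (xor_comb (\<lambda>i. mask_of n (\<lambda>j. C $$ (i, j) = 1)) x m) j)"
proof -
  have "col C j \<bullet> bit_vec m x = (\<Sum>i<m. C $$ (i, j) * of_bool (bit x i))"
    unfolding scalar_prod_def using assms by (intro sum.cong) auto
  also have "\<dots> = (\<Sum>i<m. of_bool (bit x i) * of_bool (bit (mask_of n (\<lambda>j. C $$ (i, j) = 1)) j))"
    using \<open>j < n\<close> by (intro sum.cong refl) (simp only: of_bool_bit_mask_of mult.commute)
  finally show ?thesis
    by (simp only: of_bool_bit_xor_comb)
qed

lemma card_xor_comb_kernel_mult_pow_rank:
  fixes C :: "bit mat"
  assumes C: "C \<in> carrier_mat m n"
  shows "card {x. x < 2 ^ m \<and> xor_comb (\<lambda>i. mask_of n (\<lambda>j. C $$ (i, j) = 1)) x m = 0} *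
    2 ^ rank_F2 C = 2 ^ m"
proof -
  interpret vs: vec_space "TYPE(bit)" m .
  let ?c = "\<lambda>i. mask_of n (\<lambda>j. C $$ (i, j) = 1)" and ?S = "set (cols C)"
  have S: "?S \<subseteq> carrier_vec m"
    using C cols_dim by blast
  have "xor_comb ?c x m = 0 \<longleftrightarrow> (\<forall>j<n. col C j \<bullet> bit_vec m x = 0)" for x
  proof -
    have "xor_comb ?c x m < 2 ^ n"
      by (rule xor_comb_less) (simp add: mask_of_less)
    then have "xor_comb ?c x m = 0 \<longleftrightarrow> (\<forall>j<n. \<not> bit (xor_comb ?c x m) j)"
      by (auto intro: nat_eq_by_low_bits)
    then show ?thesis
      using col_scalar_prod_bit_vec[OF C] by simp
  qed
  then have "card {x. x < 2 ^ m \<and> xor_comb ?c x m = 0} = card {y \<in> carrier_vec m. \<forall>j<n. col C j \<bullet> y = 0}"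
    using card_Collect_bit_vec[of m "\<lambda>y. \<forall>j<n. col C j \<bullet> y = 0"] by simp
  also have "{y \<in> carrier_vec m. \<forall>j<n. col C j \<bullet> y = 0} =
      {y \<in> carrier_vec m. \<forall>s\<in>?S. s \<bullet> y = 0}"
    using C by (auto simp: cols_def)
  also have "\<dots> = {y \<in> carrier_vec m. \<forall>v\<in>vs.span ?S. v \<bullet> y = 0}"
    using vs.orthogonal_span_iff[OF _ S] by auto
  finally have "card {x. x < 2 ^ m \<and> xor_comb ?c x m = 0} * card (vs.span ?S) = 2 ^ m"
    using card_mult_card_orthogonal[of "vs.span ?S" m] vs.span_closed[OF S] vs.span_add1[OF S]
      vectorspace.span_zero[OF vs.vectorspace_axioms]
    by (simp add: mult.commute subset_eq)
  then show ?thesis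
    using vs.card_span_cols[OF C] C by (simp add: rank_F2_def card_UNIV_bit)
qed

section \<open>The field GF(2)[x]/(P)\<close>

lemma coeff_poly_of_nat: "coeff (poly_of_nat n a) i = (if i < n then of_bool (bit a i) else 0)"
  by (simp add: poly_of_nat_def nth_default_def)

lemma poly_of_nat_xor: "poly_of_nat n (xor a b) = poly_of_nat n a + poly_of_nat n b"
  by (rule poly_eqI) (simp add: coeff_poly_of_nat bit_xor_iff of_bool_neq_bit)

lemma poly_of_nat_diff: "poly_of_nat n a - poly_of_nat n b = poly_of_nat n (xor a b)"
  by (rule poly_eqI) (simp add: coeff_poly_of_nat bit_xor_iff of_bool_neq_bit)

lemma poly_of_nat_1: "n > 0 \<Longrightarrow> poly_of_nat n 1 = 1"
  by (rule poly_eqI) (simp add: coeff_poly_of_nat bit_Suc_0_iff)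

lemma poly_of_nat_eq_iff:
  "a < 2 ^ n \<Longrightarrow> b < 2 ^ n \<Longrightarrow> poly_of_nat n a = poly_of_nat n b \<longleftrightarrow> a = b"
  by (metis coeff_poly_of_nat nat_eq_by_low_bits of_bool_eq_iff)

lemma poly_of_nat_0 [simp]: "poly_of_nat n 0 = 0"
  by (rule poly_eqI) (simp add: coeff_poly_of_nat)

lemma poly_of_nat_eq_0_iff: "a < 2 ^ n \<Longrightarrow> poly_of_nat n a = 0 \<longleftrightarrow> a = 0"
  using poly_of_nat_eq_iff[of a n 0] by simp

lemma poly_of_nat_eq_sum: "poly_of_nat n a = (\<Sum>i<n. monom (of_bool (bit a i)) i)"
  by (rule poly_eqI) (simp add: coeff_poly_of_nat coeff_sum)

lemma degree_poly_of_nat_le: "degree (poly_of_nat n a) \<le> n - 1"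
  by (rule degree_le) (auto simp: coeff_poly_of_nat)

lemma mult_monom_eq_smult: "q * monom c j = smult c (q * monom (1::'a::comm_semiring_1) j)"
proof -
  have "q * monom c j = q * smult c (monom 1 j)"
    by (simp add: smult_monom)
  also have "\<dots> = smult c (q * monom 1 j)"
    by (rule mult_smult_right)
  finally show ?thesis .
qed

lemma poly_of_nat_mask_of_coeff:
  "degree r < n \<Longrightarrow> poly_of_nat n (mask_of n (\<lambda>i. coeff r i = 1)) = r"
  by (rule poly_eqI) (auto simp: coeff_poly_of_nat of_bool_bit_mask_of coeff_eq_0)

locale binary_field =
  fixes n :: nat and P :: "bit poly"
  assumes irreducible: "irreducible P" and degree_P: "degree P = n"
begin

lemma P_nonzero: "P \<noteq> 0"
  using irreducible by auto

lemma n_pos: "n > 0"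
proof (rule ccontr)
  assume "\<not> n > 0"
  then obtain c where "P = [:c:]"
    using degree_P by (metis degree_eq_zeroE gr0I)
  then have "is_unit P"
    using P_nonzero by (simp add: is_unit_const_poly_iff)
  then show False
    using irreducible by (simp add: irreducible_def)
qed

lemma degree_mod_P_less: "degree (q mod P) < n"
  using degree_mod_less[OF P_nonzero, of q] n_pos degree_P by auto

lemma degree_poly_of_nat_less: "degree (poly_of_nat n a) < n"
  using degree_poly_of_nat_le[of n a] n_pos by simp

lemma eq_sum_monom_if_degree_less: "degree r < n \<Longrightarrow> r = (\<Sum>i<n. monom (coeff r i) i)"
  using poly_as_sum_of_monoms'[of r "n - 1"] n_pos by (simp add: lessThan_Suc_atMost[symmetric])

lemma not_P_dvd_poly_of_nat:
  assumes "a < 2 ^ n" "a \<noteq> 0"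
  shows "\<not> P dvd poly_of_nat n a"
proof
  assume "P dvd poly_of_nat n a"
  moreover have "poly_of_nat n a \<noteq> 0"
    using assms poly_of_nat_eq_0_iff by simp
  ultimately have "n \<le> degree (poly_of_nat n a)"
    using dvd_imp_degree_le degree_P by metis
  with degree_poly_of_nat_less[of a] show False
    by simp
qed

text \<open>Every nonzero residue is invertible: multiplication by it is injective on the
  \<open>2 ^ n\<close> residues of degree below \<open>n\<close>, hence surjective.\<close>

lemma exists_inverse_mod:
  assumes "\<not> P dvd q"
  obtains h where "(q * h) mod P = 1"
proof -
  define \<phi> where "\<phi> t = mask_of n (\<lambda>i. coeff ((q * poly_of_nat n t) mod P) i = 1)" for t
  have poly_\<phi>: "poly_of_nat n (\<phi> t) = (q * poly_of_nat n t) mod P" for t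
    unfolding \<phi>_def by (rule poly_of_nat_mask_of_coeff[OF degree_mod_P_less])
  have "inj_on \<phi> {..<2 ^ n}"
  proof (rule inj_onI)
    fix t t'
    assume t: "t \<in> {..<2 ^ n}" "t' \<in> {..<2 ^ n}" and "\<phi> t = \<phi> t'"
    then have "P dvd q * (poly_of_nat n t - poly_of_nat n t')"
      using poly_\<phi> by (metis mod_eq_dvd_iff right_diff_distrib)
    then have "P dvd q * poly_of_nat n (xor t t')"
      by (simp add: poly_of_nat_diff)
    then have "P dvd poly_of_nat n (xor t t')"
      using prime_elem_dvd_multD[OF field_poly_irreducible_imp_prime[OF irreducible]] assms
      by blast
    then show "t = t'"
      using not_P_dvd_poly_of_nat[of "xor t t'"] t by (auto simp: xor_less_pow xor_eq_0_iff)
  qed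
  then have "\<phi> ` {..<2 ^ n} = {..<2 ^ n}"
    by (intro endo_inj_surj) (auto simp: \<phi>_def mask_of_less)
  moreover have "1 \<in> {..<(2::nat) ^ n}"
    using one_less_power[of "2::nat" n] n_pos by simp
  ultimately obtain t where "\<phi> t = 1"
    by (metis imageE)
  then have "(q * poly_of_nat n t) mod P = 1"
    using poly_\<phi>[of t] poly_of_nat_1[OF n_pos] by metis
  then show ?thesis
    using that by blast
qed

text \<open>\<open>coeff0_mod\<close> is the linear extension of \<open>x^k \<mapsto> Gamma_{k,0}\<close>, from which \<open>M_n^(0)\<close>
  is built.\<close>

definition coeff0_mod :: "bit poly \<Rightarrow> bit" where
  "coeff0_mod q = coeff (q mod P) 0"

lemma coeff0_mod_add: "coeff0_mod (p + q) = coeff0_mod p + coeff0_mod q"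
  by (simp add: coeff0_mod_def poly_mod_add_left)

lemma coeff0_mod_smult: "coeff0_mod (smult c p) = c * coeff0_mod p"
  by (simp add: coeff0_mod_def mod_smult_left)

lemma coeff0_mod_sum: "coeff0_mod (sum f A) = (\<Sum>i\<in>A. coeff0_mod (f i))"
  by (induction A rule: infinite_finite_induct) (simp_all add: coeff0_mod_def coeff0_mod_add[unfolded coeff0_mod_def])

lemma coeff0_mod_mod_right: "coeff0_mod (q * (p mod P)) = coeff0_mod (q * p)"
  by (simp add: coeff0_mod_def mod_mult_right_eq)

lemma coeff0_mod_mult_sum_monom:
  assumes "degree r < n"
  shows "coeff0_mod (q * r) = (\<Sum>j<n. coeff r j * coeff0_mod (q * monom 1 j))"
proof -
  have "q * r = q * (\<Sum>j<n. monom (coeff r j) j)"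
    using eq_sum_monom_if_degree_less[OF assms] by (rule arg_cong)
  also have "\<dots> = (\<Sum>j<n. smult (coeff r j) (q * monom 1 j))"
    unfolding sum_distrib_left by (intro sum.cong refl) (rule mult_monom_eq_smult)
  finally have "q * r = (\<Sum>j<n. smult (coeff r j) (q * monom 1 j))" .
  then show ?thesis
    by (simp only: coeff0_mod_sum coeff0_mod_smult)
qed

lemma alpha_mub_eq: "alpha_mub n P v i j = coeff0_mod (poly_of_nat n v * monom 1 i * monom 1 j)"
proof -
  define r where "r = (poly_of_nat n v * monom 1 i) mod P"
  have "coeff0_mod (poly_of_nat n v * monom 1 i * monom 1 j) = coeff0_mod (monom 1 j * r)"
    by (simp add: r_def coeff0_mod_mod_right mult.commute)
  also have "\<dots> = (\<Sum>p<n. coeff r p * coeff0_mod (monom 1 (p + j)))"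
    by (simp add: coeff0_mod_mult_sum_monom r_def degree_mod_P_less mult_monom add.commute)
  also have "\<dots> = alpha_mub n P v i j"
    by (simp add: alpha_mub_def r_def M0_def Gamma_def coeff0_mod_def)
  finally show ?thesis
    by simp
qed

definition mub_row :: "nat \<Rightarrow> nat \<Rightarrow> nat" where
  "mub_row v i = mask_of n (\<lambda>j. alpha_mub n P v i j = 1)"

definition mub_z_label :: "nat \<Rightarrow> nat \<Rightarrow> nat" where
  "mub_z_label v x = xor_comb (mub_row v) x n"

lemma mub_z_label_less: "mub_z_label v x < 2 ^ n"
  unfolding mub_z_label_def by (rule xor_comb_less) (simp add: mub_row_def mask_of_less)

lemma of_bool_bit_mub_z_label:
  assumes "j < n"
  shows "(of_bool (bit (mub_z_label v x) j) :: bit) =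
    coeff0_mod (poly_of_nat n v * poly_of_nat n x * monom 1 j)"
proof -
  let ?t = "\<lambda>i. smult (of_bool (bit x i)) (poly_of_nat n v * monom 1 i * monom 1 j)"
  have "(of_bool (bit (mub_z_label v x) j) :: bit) = (\<Sum>i<n. of_bool (bit x i) * alpha_mub n P v i j)"
    unfolding mub_z_label_def of_bool_bit_xor_comb mub_row_def
    using assms by (intro sum.cong refl) (simp only: of_bool_bit_mask_of)
  also have "\<dots> = coeff0_mod (\<Sum>i<n. ?t i)"
    by (simp only: alpha_mub_eq coeff0_mod_sum coeff0_mod_smult)
  also have "(\<Sum>i<n. ?t i) = poly_of_nat n v * poly_of_nat n x * monom 1 j"
    unfolding poly_of_nat_eq_sum[of n x] sum_distrib_left sum_distrib_right
    by (intro sum.cong refl) (simp only: mult_monom_eq_smult[of _ "of_bool _"] mult_smult_left)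
  finally show ?thesis .
qed

text \<open>If \<open>v \<noteq> v'\<close>, then \<open>q = (v + v') x\<close> is a unit mod \<open>P\<close> with \<open>coeff0_mod (q x^j) = 0\<close> for all
  \<open>j < n\<close>, hence \<open>coeff0_mod (q h) = 0\<close> for every \<open>h\<close>, contradicting
  \<open>coeff0_mod (q q^-1) = 1\<close>.\<close>

lemma mub_z_label_inj:
  assumes x: "x < 2 ^ n" "x \<noteq> 0" and v: "v < 2 ^ n" "v' < 2 ^ n"
    and eq: "mub_z_label v x = mub_z_label v' x"
  shows "v = v'"
proof (rule ccontr)
  assume "v \<noteq> v'"
  define q where "q = poly_of_nat n (xor v v') * poly_of_nat n x"
  have "\<not> P dvd q"
    using prime_elem_dvd_multD[OF field_poly_irreducible_imp_prime[OF irreducible]]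
      not_P_dvd_poly_of_nat[of "xor v v'"] not_P_dvd_poly_of_nat[OF x] v \<open>v \<noteq> v'\<close>
    by (auto simp: q_def xor_less_pow xor_eq_0_iff)
  then obtain h where "(q * h) mod P = 1"
    by (rule exists_inverse_mod)
  then have "coeff0_mod (q * (h mod P)) = 1"
    by (simp only: coeff0_mod_mod_right) (simp add: coeff0_mod_def)
  moreover have "coeff0_mod (q * monom 1 j) = 0" if "j < n" for j
  proof -
    have "coeff0_mod (poly_of_nat n v * poly_of_nat n x * monom 1 j) =
        coeff0_mod (poly_of_nat n v' * poly_of_nat n x * monom 1 j)"
      using eq of_bool_bit_mub_z_label[OF that] by metis
    then show ?thesis
      by (simp add: q_def poly_of_nat_xor algebra_simps coeff0_mod_add)
  qed
  ultimately show False
    by (simp add: coeff0_mod_mult_sum_monom degree_mod_P_less)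
qed

lemma bij_betw_mub_z_label:
  assumes "x < 2 ^ n" "x \<noteq> 0"
  shows "bij_betw (\<lambda>v. mub_z_label v x) {..<2 ^ n} {..<2 ^ n}"
proof -
  have "inj_on (\<lambda>v. mub_z_label v x) {..<2 ^ n}"
    using mub_z_label_inj[OF assms] by (auto intro: inj_onI)
  moreover have "(\<lambda>v. mub_z_label v x) ` {..<2 ^ n} = {..<2 ^ n}"
    using calculation by (intro endo_inj_surj) (auto simp: mub_z_label_less)
  ultimately show ?thesis
    by (simp add: bij_betw_def)
qed

end

section \<open>Pauli strings stabilising a Clifford state\<close>

lemma clifford_permutes_pauli_labels:
  assumes V: "clifford n V"
  obtains g where "bij_betw g ({..<2 ^ n} \<times> {..<2 ^ n}) ({..<2 ^ n} \<times> {..<2 ^ n})"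
    and "\<And>p. p \<in> {..<2 ^ n} \<times> {..<2 ^ n} \<Longrightarrow> \<exists>ph. ph \<noteq> 0 \<and>
      V * pauli n (fst p) (snd p) * mat_adjoint V = ph \<cdot>\<^sub>m pauli n (fst (g p)) (snd (g p))"
proof -
  let ?L = "{..<(2::nat) ^ n} \<times> {..<(2::nat) ^ n}"
  have "\<exists>q. q \<in> ?L \<and> (\<exists>ph. ph \<noteq> 0 \<and>
      V * pauli n (fst p) (snd p) * mat_adjoint V = ph \<cdot>\<^sub>m pauli n (fst q) (snd q))"
    if "p \<in> ?L" for p
  proof -
    from that have "fst p < 2 ^ n" "snd p < 2 ^ n"
      by auto
    then obtain ph a' b' where "ph \<noteq> 0" "a' < 2 ^ n" "b' < 2 ^ n"
      "V * pauli n (fst p) (snd p) * mat_adjoint V = ph \<cdot>\<^sub>m pauli n a' b'"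
      by (rule clifford_conj_pauli[OF V])
    then show ?thesis
      by (intro exI[of _ "(a', b')"]) auto
  qed
  then have "\<forall>p\<in>?L. \<exists>q. q \<in> ?L \<and> (\<exists>ph. ph \<noteq> 0 \<and>
      V * pauli n (fst p) (snd p) * mat_adjoint V = ph \<cdot>\<^sub>m pauli n (fst q) (snd q))"
    by blast
  from bchoice[OF this] obtain g where "\<forall>p\<in>?L. g p \<in> ?L \<and> (\<exists>ph. ph \<noteq> 0 \<and>
      V * pauli n (fst p) (snd p) * mat_adjoint V = ph \<cdot>\<^sub>m pauli n (fst (g p)) (snd (g p)))" ..
  then have g: "g ` ?L \<subseteq> ?L"
    and conj: "\<And>p. p \<in> ?L \<Longrightarrow> \<exists>ph. ph \<noteq> 0 \<and>
      V * pauli n (fst p) (snd p) * mat_adjoint V = ph \<cdot>\<^sub>m pauli n (fst (g p)) (snd (g p))"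
    by blast+
  have undo: "pauli n a b = mat_adjoint V * (V * pauli n a b * mat_adjoint V) * V" for a b
    using conj_inverse[OF unitary_mat_adjoint[OF clifford_unitary_mat[OF V]], of "pauli n a b"] by simp
  have "inj_on g ?L"
  proof (rule inj_onI)
    fix p p'
    assume p: "p \<in> ?L" and p': "p' \<in> ?L" and same: "g p = g p'"
    let ?Y = "mat_adjoint V * pauli n (fst (g p)) (snd (g p)) * V"
    obtain ph where "ph \<noteq> 0"
      and "V * pauli n (fst p) (snd p) * mat_adjoint V = ph \<cdot>\<^sub>m pauli n (fst (g p)) (snd (g p))"
      using conj[OF p] by blast
    then have Y: "pauli n (fst p) (snd p) = ph \<cdot>\<^sub>m ?Y"
      using undo conj_smult[OF clifford_unitary_mat[OF V] pauli_carrier] by metis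
    obtain ph' where "V * pauli n (fst p') (snd p') * mat_adjoint V = ph' \<cdot>\<^sub>m pauli n (fst (g p)) (snd (g p))"
      using conj[OF p'] same by auto
    then have Y': "pauli n (fst p') (snd p') = ph' \<cdot>\<^sub>m ?Y"
      using undo conj_smult[OF clifford_unitary_mat[OF V] pauli_carrier] by metis
    have "ph \<cdot>\<^sub>m pauli n (fst p') (snd p') = ph' \<cdot>\<^sub>m pauli n (fst p) (snd p)"
      unfolding Y Y' by (simp add: smult_smult_mat mult.commute)
    then have "fst p' = fst p" "snd p' = snd p"
      using pauli_labels_unique[OF \<open>ph \<noteq> 0\<close>] p p' by (auto simp: mem_Times_iff)
    then show "p = p'"
      by (simp add: prod_eq_iff)
  qed
  moreover have "g ` ?L = ?L"
    using calculation g by (intro endo_inj_surj) simp_all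
  ultimately show ?thesis
    using that conj by (auto simp: bij_betw_def)
qed

text \<open>\<open>(a, b) \<in> stab_labels n V\<close> iff \<open>X^a Z^b\<close> has nonzero expectation in the state
  \<open>V^dagger|0>\<close>, i.e. fixes that state up to a phase.\<close>

definition stab_labels :: "nat \<Rightarrow> complex mat \<Rightarrow> (nat \<times> nat) set" where
  "stab_labels n V = {(a, b). a < 2 ^ n \<and> b < 2 ^ n \<and> (V * pauli n a b * mat_adjoint V) $$ (0, 0) \<noteq> 0}"

lemma zero_mem_stab_labels:
  assumes "unitary_mat n V"
  shows "(0, 0) \<in> stab_labels n V"
  using conj_one[OF unitary_mat_adjoint[OF assms]] by (simp add: stab_labels_def pauli_0_0)

lemma card_stab_labels:
  assumes V: "clifford n V"
  shows "card (stab_labels n V) = 2 ^ n"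
proof -
  let ?L = "{..<(2::nat) ^ n} \<times> {..<(2::nat) ^ n}"
  obtain g where bij: "bij_betw g ?L ?L"
    and conj: "\<And>p. p \<in> ?L \<Longrightarrow> \<exists>ph. ph \<noteq> 0 \<and>
      V * pauli n (fst p) (snd p) * mat_adjoint V = ph \<cdot>\<^sub>m pauli n (fst (g p)) (snd (g p))"
    using clifford_permutes_pauli_labels[OF V] by blast
  have "(V * pauli n (fst p) (snd p) * mat_adjoint V) $$ (0, 0) \<noteq> 0 \<longleftrightarrow> fst (g p) = 0"
    if "p \<in> ?L" for p
    using conj[OF that] by (auto simp: pauli_index_0_0 split: if_splits)
  moreover have "stab_labels n V = {p \<in> ?L. (V * pauli n (fst p) (snd p) * mat_adjoint V) $$ (0, 0) \<noteq> 0}"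
    by (auto simp: stab_labels_def)
  ultimately have "stab_labels n V = {p \<in> ?L. fst (g p) = 0}"
    by blast
  then have "card (stab_labels n V) = card {q \<in> ?L. fst q = 0}"
    using bij_betw_same_card[OF bij_betw_Collect[OF bij, where Q = "\<lambda>q. fst q = 0"]] by simp
  also have "{q \<in> ?L. fst q = 0} = {0} \<times> {..<2 ^ n}"
    by auto
  finally show ?thesis
    by (simp add: card_cartesian_product)
qed

lemma pauli_tableau_one: "pauli_tableau n (1\<^sub>m (2 ^ n)) (\<lambda>_. 0) (\<lambda>i. 2 ^ i)"
proof unfold_locales
  fix i
  show "\<exists>ph. mat_adjoint (1\<^sub>m (2 ^ n)) * Zq n i * 1\<^sub>m (2 ^ n) = ph \<cdot>\<^sub>m pauli n 0 (2 ^ i)"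
    by (intro exI[of _ 1]) (simp add: Zq_def)
qed (simp_all add: unitary_mat_one)

lemma (in binary_field) pauli_tableau_mub:
  assumes "mub_family n P Uf" "v < 2 ^ n"
  shows "pauli_tableau n (Uf v) (\<lambda>i. 2 ^ i) (mub_row v)"
proof unfold_locales
  show "unitary_mat n (Uf v)"
    using assms by (simp add: mub_family_def clifford_def)
  fix i
  assume "i < n"
  then obtain s where "mat_adjoint (Uf v) * Zq n i * Uf v = s \<cdot>\<^sub>m g_mub n P v i"
    using assms by (auto simp: mub_family_def)
  then show "\<exists>ph. mat_adjoint (Uf v) * Zq n i * Uf v = ph \<cdot>\<^sub>m pauli n (2 ^ i) (mub_row v i)"
    by (auto simp: g_mub_def mub_row_def smult_smult_mat)
qed (simp_all add: mub_row_def mask_of_less)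

lemma unitary_mat_mub_ensemble:
  "mub_family n P Uf \<Longrightarrow> U \<in> set (mub_ensemble n Uf) \<Longrightarrow> unitary_mat n U"
  by (auto simp: mub_ensemble_def mub_family_def clifford_def unitary_mat_one)

lemma pauli_tableau_mult_adjoint:
  assumes U: "pauli_tableau n U c d" and V: "clifford n V"
  obtains c' d' where "pauli_tableau n (U * mat_adjoint V) c' d'"
proof -
  interpret U: pauli_tableau n U c d
    by (fact U)
  have V_unitary: "unitary_mat n V"
    using V by (rule clifford_unitary_mat)
  have "\<exists>l. fst l < 2 ^ n \<and> snd l < 2 ^ n \<and> (\<exists>ph.
      mat_adjoint (U * mat_adjoint V) * Zq n i * (U * mat_adjoint V) = ph \<cdot>\<^sub>m pauli n (fst l) (snd l))"
    if i: "i < n" for i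
  proof -
    obtain ph where ph: "mat_adjoint U * Zq n i * U = ph \<cdot>\<^sub>m pauli n (c i) (d i)"
      using U.conj_Zq[OF i] by blast
    obtain ph' a b where ab: "a < 2 ^ n" "b < 2 ^ n"
      and conj: "V * pauli n (c i) (d i) * mat_adjoint V = ph' \<cdot>\<^sub>m pauli n a b"
      using clifford_conj_pauli[OF V U.X_label_less[OF i] U.Z_label_less[OF i]] by metis
    have "mat_adjoint (U * mat_adjoint V) * Zq n i * (U * mat_adjoint V) =
        V * (ph \<cdot>\<^sub>m pauli n (c i) (d i)) * mat_adjoint V"
      using conj_mult_adjoint[OF U.unitary V_unitary] ph by (simp add: Zq_def)
    also have "\<dots> = (ph * ph') \<cdot>\<^sub>m pauli n a b"
      using conj_smult[OF unitary_mat_adjoint[OF V_unitary] pauli_carrier] conj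
      by (simp add: smult_smult_mat)
    finally show ?thesis
      using ab by (intro exI[of _ "(a, b)"]) auto
  qed
  then have "\<forall>i\<in>{..<n}. \<exists>l. fst l < 2 ^ n \<and> snd l < 2 ^ n \<and> (\<exists>ph.
      mat_adjoint (U * mat_adjoint V) * Zq n i * (U * mat_adjoint V) = ph \<cdot>\<^sub>m pauli n (fst l) (snd l))"
    by blast
  from bchoice[OF this] obtain l where l: "\<forall>i\<in>{..<n}. fst (l i) < 2 ^ n \<and> snd (l i) < 2 ^ n \<and> (\<exists>ph.
      mat_adjoint (U * mat_adjoint V) * Zq n i * (U * mat_adjoint V) = ph \<cdot>\<^sub>m pauli n (fst (l i)) (snd (l i)))" ..
  have "pauli_tableau n (U * mat_adjoint V) (\<lambda>i. fst (l i)) (\<lambda>i. snd (l i))"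
    using l unitary_mat_mult[OF U.unitary unitary_mat_adjoint[OF V_unitary]] by unfold_locales auto
  then show ?thesis
    by (rule that)
qed

context pauli_tableau
begin

lemma conj_clifford_Z_string_ne_0_iff:
  assumes V: "clifford n V" and "x < 2 ^ n"
  shows "(V * (mat_adjoint W * pauli n 0 x * W) * mat_adjoint V) $$ (0, 0) \<noteq> 0 \<longleftrightarrow>
    (xor_comb c x n, xor_comb d x n) \<in> stab_labels n V"
proof -
  obtain \<theta> where "\<theta> \<noteq> 0"
    and conj: "mat_adjoint W * pauli n 0 x * W = \<theta> \<cdot>\<^sub>m pauli n (xor_comb c x n) (xor_comb d x n)"
    using conj_Z_string[OF \<open>x < 2 ^ n\<close>] by blast
  have "V * (mat_adjoint W * pauli n 0 x * W) * mat_adjoint V =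
      \<theta> \<cdot>\<^sub>m (V * pauli n (xor_comb c x n) (xor_comb d x n) * mat_adjoint V)"
    using conj conj_smult[OF unitary_mat_adjoint[OF clifford_unitary_mat[OF V]] pauli_carrier] by simp
  moreover have "xor_comb c x n < 2 ^ n" "xor_comb d x n < 2 ^ n"
    using X_label_less Z_label_less by (simp_all add: xor_comb_less)
  ultimately show ?thesis
    using \<open>\<theta> \<noteq> 0\<close> unitary_mat_carrier[OF clifford_unitary_mat[OF V]]
    by (simp add: stab_labels_def)
qed

lemma Max_outcome_prob:
  assumes V: "clifford n V"
  shows "Max (outcome_prob W V ` {..<2 ^ n}) =
    card {x. x < 2 ^ n \<and> (xor_comb c x n, xor_comb d x n) \<in> stab_labels n V} / 2 ^ n"
proof -
  obtain c' d' where "pauli_tableau n (W * mat_adjoint V) c' d'"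
    using pauli_tableau_mult_adjoint[OF pauli_tableau_axioms V] by blast
  then interpret WV: pauli_tableau n "W * mat_adjoint V" c' d' .
  have "WV.z_stabilizers = {x. x < 2 ^ n \<and> (xor_comb c x n, xor_comb d x n) \<in> stab_labels n V}"
    unfolding WV.z_stabilizers_def WV.z_expectation_def
    using conj_mult_adjoint[OF unitary clifford_unitary_mat[OF V] pauli_carrier]
      conj_clifford_Z_string_ne_0_iff[OF V] by auto
  moreover have "outcome_prob W V = WV.prob"
    by (simp add: fun_eq_iff outcome_prob_def WV.prob_def)
  ultimately show ?thesis
    using WV.Max_prob by simp
qed

end

lemma outcome_prob_distribution:
  assumes U: "unitary_mat n U" and V: "clifford n V" and tab: "z_tableau n (U * mat_adjoint V) C D"
  shows "card {b. b < 2 ^ n \<and> outcome_prob U V b = 1 / 2 ^ rank_F2 C} = 2 ^ rank_F2 C \<and>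
    card {b. b < 2 ^ n \<and> outcome_prob U V b = 0} = 2 ^ n - 2 ^ rank_F2 C"
proof -
  let ?row = "\<lambda>M i. mask_of n (\<lambda>j. M $$ (i, j) = 1)"
  interpret W: pauli_tableau n "U * mat_adjoint V" "?row C" "?row D"
    using tab unitary_mat_mult[OF U unitary_mat_adjoint[OF clifford_unitary_mat[OF V]]]
    by unfold_locales (auto simp: z_tableau_def mask_of_less)
  have "C \<in> carrier_mat n n"
    using tab by (simp add: z_tableau_def)
  then have K: "card W.z_stabilizers * 2 ^ rank_F2 C = 2 ^ n"
    using card_xor_comb_kernel_mult_pow_rank by (simp add: W.z_stabilizers_eq)
  then have "card W.support = 2 ^ rank_F2 C"
    using W.card_support_mult_card_z_stabilizers W.card_z_stabilizers_pos
    by (metis mult.commute mult_left_cancel neq0_conv)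
  moreover have "real (card W.z_stabilizers) / 2 ^ n = 1 / 2 ^ rank_F2 C"
    using arg_cong[OF K, of real] by (simp add: field_simps)
  moreover have "outcome_prob U V = W.prob"
    by (simp add: fun_eq_iff outcome_prob_def W.prob_def)
  ultimately show ?thesis
    using W.card_prob_eq_Max W.card_prob_eq_0 by simp
qed

text \<open>The \<open>N + 1\<close> lines \<open>{(0, x)}\<close> and \<open>{(x, f v x)}\<close> through the origin cover the grid and
  pairwise meet only at the origin, so summing \<open>|S \<inter> line|\<close> counts the origin \<open>N + 1\<close> times
  and every other point of \<open>S\<close> once.\<close>

lemma sum_card_lines_through_origin:
  fixes S :: "(nat \<times> nat) set" and f :: "nat \<Rightarrow> nat \<Rightarrow> nat"
  assumes S: "S \<subseteq> {..<N} \<times> {..<N}" and "(0, 0) \<in> S"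
    and f_0: "\<And>v. f v 0 = 0"
    and f_bij: "\<And>x. 0 < x \<Longrightarrow> x < N \<Longrightarrow> bij_betw (\<lambda>v. f v x) {..<N} {..<N}"
  shows "card {x. x < N \<and> (0, x) \<in> S} + (\<Sum>v<N. card {x. x < N \<and> (x, f v x) \<in> S}) = N + card S"
proof -
  define row where "row x = {b. b < N \<and> (x, b) \<in> S}" for x
  have "0 < N"
    using S \<open>(0, 0) \<in> S\<close> by auto
  have count: "card {x. x < N \<and> Q x} = (\<Sum>x<N. of_bool (Q x))" for Q
    by (simp add: lessThan_def Collect_conj_eq)
  have "card S = (\<Sum>x<N. card (row x))"
  proof -
    have "S = Sigma {..<N} row"
      using S by (auto simp: row_def)
    moreover have "\<forall>x\<in>{..<N}. finite (row x)"
      by (simp add: row_def)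
    ultimately show ?thesis
      by simp
  qed
  also have "\<dots> = card (row 0) + (\<Sum>x\<in>{..<N} - {0}. card (row x))"
    using \<open>0 < N\<close> by (simp add: sum.remove)
  finally have card_S: "card S = card (row 0) + (\<Sum>x\<in>{..<N} - {0}. card (row x))" .
  have line: "card {v. v < N \<and> (x, f v x) \<in> S} = card (row x)" if "x \<in> {..<N} - {0}" for x
  proof -
    have "bij_betw (\<lambda>v. f v x) {..<N} {..<N}"
      using that f_bij by auto
    from bij_betw_same_card[OF bij_betw_Collect[OF this, where Q = "\<lambda>b. (x, b) \<in> S"]]
    show ?thesis
      by (simp add: row_def lessThan_def Collect_conj_eq)
  qed
  have "(\<Sum>v<N. card {x. x < N \<and> (x, f v x) \<in> S}) = (\<Sum>x<N. card {v. v < N \<and> (x, f v x) \<in> S})"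
    unfolding count by (rule sum.swap)
  also have "\<dots> = card {v. v < N \<and> (0, f v 0) \<in> S} +
      (\<Sum>x\<in>{..<N} - {0}. card {v. v < N \<and> (x, f v x) \<in> S})"
    using \<open>0 < N\<close> by (simp add: sum.remove)
  also have "\<dots> = N + (\<Sum>x\<in>{..<N} - {0}. card (row x))"
    using \<open>(0, 0) \<in> S\<close> line by (simp add: f_0)
  finally show ?thesis
    using card_S by (simp add: row_def)
qed

lemma (in binary_field) sum_Max_outcome_prob_mub_ensemble:
  assumes mub: "mub_family n P Uf" and V: "clifford n V"
  shows "(\<Sum>U\<leftarrow>mub_ensemble n Uf. Max (outcome_prob U V ` {..<2 ^ n})) =
    (card {x. x < 2 ^ n \<and> (0, x) \<in> stab_labels n V} +
      (\<Sum>v<2 ^ n. card {x. x < 2 ^ n \<and> (x, mub_z_label v x) \<in> stab_labels n V})) / 2 ^ n"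
proof -
  have "(\<Sum>U\<leftarrow>mub_ensemble n Uf. Max (outcome_prob U V ` {..<2 ^ n})) =
      Max (outcome_prob (1\<^sub>m (2 ^ n)) V ` {..<2 ^ n}) + (\<Sum>v<2 ^ n. Max (outcome_prob (Uf v) V ` {..<2 ^ n}))"
    by (simp add: mub_ensemble_def interv_sum_list_conv_sum_set_nat atLeast0LessThan)
  also have "Max (outcome_prob (1\<^sub>m (2 ^ n)) V ` {..<2 ^ n}) =
      card {x. x < 2 ^ n \<and> (0, x) \<in> stab_labels n V} / 2 ^ n"
    using pauli_tableau.Max_outcome_prob[OF pauli_tableau_one V]
    by (simp add: xor_comb_pow2 take_bit_nat_eq_self cong: conj_cong)
  also have "(\<Sum>v<2 ^ n. Max (outcome_prob (Uf v) V ` {..<2 ^ n})) =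
      (\<Sum>v<2 ^ n. card {x. x < 2 ^ n \<and> (x, mub_z_label v x) \<in> stab_labels n V} / 2 ^ n)"
    using pauli_tableau.Max_outcome_prob[OF pauli_tableau_mub[OF mub] V]
    by (simp add: xor_comb_pow2 take_bit_nat_eq_self mub_z_label_def cong: conj_cong)
  finally show ?thesis
    by (simp add: add_divide_distrib sum_divide_distrib)
qed

theorem lemma2:
  fixes n :: nat and P :: "bit poly" and Uf :: "nat \<Rightarrow> complex mat" and V :: "complex mat"
  assumes "irreducible P" and "degree P = n"
    and "mub_family n P Uf"
    and "clifford n V"
  shows "(\<Sum>U\<leftarrow>mub_ensemble n Uf. Max ((\<lambda>b. outcome_prob U V b) ` {..<2 ^ n})) = 2
    \<and> (\<forall>U \<in> set (mub_ensemble n Uf). \<forall>C D. z_tableau n (U * mat_adjoint V) C D \<longrightarrow>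
         card {b. b < 2 ^ n \<and> outcome_prob U V b = 1 / 2 ^ rank_F2 C} = 2 ^ rank_F2 C \<and>
         card {b. b < 2 ^ n \<and> outcome_prob U V b = 0} = 2 ^ n - 2 ^ rank_F2 C)"
proof
  interpret binary_field n P
    using assms(1,2) by unfold_locales
  have "card {x. x < 2 ^ n \<and> (0, x) \<in> stab_labels n V} +
      (\<Sum>v<2 ^ n. card {x. x < 2 ^ n \<and> (x, mub_z_label v x) \<in> stab_labels n V}) =
      2 ^ n + card (stab_labels n V)"
    using zero_mem_stab_labels[OF clifford_unitary_mat[OF assms(4)]]
    by (intro sum_card_lines_through_origin bij_betw_mub_z_label)
      (auto simp: stab_labels_def mub_z_label_def)
  then show "(\<Sum>U\<leftarrow>mub_ensemble n Uf. Max ((\<lambda>b. outcome_prob U V b) ` {..<2 ^ n})) = 2"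
    using sum_Max_outcome_prob_mub_ensemble[OF assms(3,4)] card_stab_labels[OF assms(4)] by simp
  show "\<forall>U \<in> set (mub_ensemble n Uf). \<forall>C D. z_tableau n (U * mat_adjoint V) C D \<longrightarrow>
      card {b. b < 2 ^ n \<and> outcome_prob U V b = 1 / 2 ^ rank_F2 C} = 2 ^ rank_F2 C \<and>
      card {b. b < 2 ^ n \<and> outcome_prob U V b = 0} = 2 ^ n - 2 ^ rank_F2 C"
    using outcome_prob_distribution[OF unitary_mat_mub_ensemble[OF assms(3)] assms(4)] by blast
qed

end
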